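(* For every integer $n>0$ and every integer $j$ with $0\le j\le n$, the number $\Phi_n=\prod_{p\text{ prime},\ \{n/p\}\in[2/3,1)}p$ divides $\binom{n+j}{n}\binom{2n-j}{n}$.
   Context: $\{x\}$ denotes the fractional part of $x$. *)

theory Defs
  imports Complex_Main "HOL-Computational_Algebra.Primes"
begin

definition Phi :: "nat \<Rightarrow> nat" where
  "Phi n = (\<Prod>p\<in>{p::nat. prime p \<and> 2/3 \<le> frac (real n / real p) \<and> frac (real n / real p) < 1}. p)"

end

theory Submission
  imports Defs
begin

text \<open>
  Write \<open>r = n mod p\<close>, so that \<open>{n/p} \<ge> 2/3\<close> means \<open>3 r \<ge> 2 p\<close>.
  Since \<open>(n + j) + (2 n - j) = 3 n\<close>, the residues of \<open>n + j\<close> and \<open>2 n - j\<close> cannot both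
  be at least \<open>r\<close>: their sum would lie in \<open>[2 r, 2 p)\<close> and be congruent to \<open>3 r\<close>,
  yet \<open>3 r - 2 p < r\<close> and \<open>3 r - p < 2 r\<close>. A residue of \<open>m\<close> below that of \<open>n\<close> means a
  carry when adding \<open>n\<close> and \<open>m - n\<close> in base \<open>p\<close>, so \<open>p\<close> divides \<open>m choose n\<close>.
  Thus each of the distinct primes making up \<open>\<Phi>\<^sub>n\<close> divides the product.
\<close>

lemma prime_dvd_choose_if_mod_less:
  fixes p m n :: nat
  assumes "prime p" and "m mod p < n mod p"
  shows "p dvd (m choose n)"
  using assms(2)
proof (induction m arbitrary: n)
  case 0
  then show ?case by (cases n) simp_all
next
  case (Suc m)
  obtain n' where n: "n = Suc n'" using Suc.prems by (cases n) auto
  show ?case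
  proof (cases "p dvd Suc m")
    case True
    have "\<not> p dvd n" using Suc.prems by (simp add: dvd_eq_mod_eq_0)
    moreover have "n * (Suc m choose n) = Suc m * (m choose n')"
      using times_binomial_minus1_eq[of n "Suc m"] n by simp
    ultimately show ?thesis
      using True assms(1) prime_dvd_multD by (metis dvd_mult2)
  next
    case False
    \<comment> \<open>Neither residue wraps around, so both Pascal summands inherit the hypothesis.\<close>
    then have "Suc m mod p = Suc (m mod p)"
      by (metis dvd_eq_mod_eq_0 mod_Suc)
    moreover have "n mod p = Suc (n' mod p)"
      using Suc.prems n by (metis less_nat_zero_code mod_Suc)
    ultimately have "m mod p < n' mod p" "m mod p < n mod p"
      using Suc.prems by linarith+
    then have "p dvd (m choose n')" "p dvd (m choose n)" using Suc.IH by blast+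
    then show ?thesis unfolding n by simp
  qed
qed

lemma mod_less_mod_if_add_eq_triple:
  fixes a b n p :: nat
  assumes "p > 0" and "a + b = 3 * n" and "2 * p \<le> 3 * (n mod p)"
  shows "a mod p < n mod p \<or> b mod p < n mod p"
proof (rule ccontr)
  define r s where "r = n mod p" and "s = a mod p + b mod p"
  assume "\<not> ?thesis"
  then have "2 * r \<le> s" unfolding r_def s_def by linarith
  have "r < p" unfolding r_def using assms(1) by simp
  have "s < 2 * p" unfolding s_def
    using mod_less_divisor[OF assms(1), of a] mod_less_divisor[OF assms(1), of b] by linarith
  have "s mod p = (3 * n) mod p"
    unfolding s_def using assms(2) by (simp add: mod_add_eq)
  also have "\<dots> = (3 * r - 2 * p + p * 2) mod p"
    using assms(3) unfolding r_def by (simp add: mod_mult_right_eq)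
  also have "\<dots> = 3 * r - 2 * p"
    using \<open>r < p\<close> by simp
  finally have "s mod p = 3 * r - 2 * p" .
  \<comment> \<open>But \<open>s mod p\<close> is \<open>s \<ge> 2 r\<close> or \<open>s - p \<ge> 2 r - p\<close>, while \<open>3 r - 2 p\<close> is smaller than both, as \<open>r < p\<close>.\<close>
  moreover have "s mod p = (if s < p then s else s - p)"
    using \<open>s < 2 * p\<close> by (simp add: le_mod_geq)
  ultimately show False
    using \<open>2 * r \<le> s\<close> \<open>r < p\<close> assms(3) unfolding r_def by (auto split: if_splits)
qed

lemma prime_dvd_choose_mult_choose:
  fixes p n j :: nat
  assumes "prime p" and "j \<le> n" and "2 * p \<le> 3 * (n mod p)"
  shows "p dvd ((n + j) choose n) * ((2 * n - j) choose n)"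
proof -
  have "(n + j) + (2 * n - j) = 3 * n" using assms(2) by simp
  then have "(n + j) mod p < n mod p \<or> (2 * n - j) mod p < n mod p"
    using prime_gt_0_nat[OF assms(1)] assms(3) by (intro mod_less_mod_if_add_eq_triple)
  then show ?thesis
    using prime_dvd_choose_if_mod_less[OF assms(1)] by (meson dvd_mult dvd_mult2)
qed

lemma frac_of_nat_divide:
  fixes n p :: nat
  assumes "p > 0"
  shows "frac (real n / real p) = real (n mod p) / real p"
proof (subst frac_unique_iff, intro conjI)
  have "real n = real (n div p) * real p + real (n mod p)"
    by (metis of_nat_add of_nat_mult div_mult_mod_eq)
  then show "real n / real p - real (n mod p) / real p \<in> \<int>"
    using assms by (simp add: field_simps)
qed (use assms in auto)

lemma two_thirds_le_frac_iff:
  fixes n p :: nat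
  assumes "p > 0"
  shows "2/3 \<le> frac (real n / real p) \<longleftrightarrow> 2 * p \<le> 3 * (n mod p)"
proof -
  have "2/3 \<le> frac (real n / real p) \<longleftrightarrow> 2 * real p \<le> 3 * real (n mod p)"
    using assms by (simp add: frac_of_nat_divide field_simps)
  also have "\<dots> \<longleftrightarrow> 2 * p \<le> 3 * (n mod p)" by linarith
  finally show ?thesis .
qed

lemma prod_primes_dvd:
  fixes S :: "'a :: factorial_semiring_gcd set"
  assumes "finite S" and "\<And>p. p \<in> S \<Longrightarrow> prime p \<and> p dvd x"
  shows "\<Prod>S dvd x"
  using assms
proof (induction S rule: finite_induct)
  case empty
  then show ?case by simp
next
  case (insert q S)
  have "\<not> q dvd \<Prod>S"
  proof
    assume "q dvd \<Prod>S"
    then obtain r where "r \<in> S" "q dvd r"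
      using insert prime_dvd_prod_iff[of S q "\<lambda>x. x"] by auto
    then have "q = r" using insert.prems by (intro primes_dvd_imp_eq) auto
    then show False using insert.hyps(2) \<open>r \<in> S\<close> by simp
  qed
  then have "coprime q (\<Prod>S)" using insert prime_imp_coprime by auto
  then show ?case using insert divides_mult by auto
qed

theorem mainTheorem15:
  fixes n j :: nat
  assumes "n > 0" and "j \<le> n"
  shows "Phi n dvd ((n + j) choose n) * ((2 * n - j) choose n)"
proof -
  define S where "S = {p::nat. prime p \<and> 2/3 \<le> frac (real n / real p) \<and> frac (real n / real p) < 1}"
  have "prime p \<and> p dvd ((n + j) choose n) * ((2 * n - j) choose n)" if "p \<in> S" for p
  proof -
    from that have p: "prime p" and "2/3 \<le> frac (real n / real p)" unfolding S_def by auto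
    then have "2 * p \<le> 3 * (n mod p)" using two_thirds_le_frac_iff prime_gt_0_nat by blast
    then show ?thesis using p prime_dvd_choose_mult_choose assms(2) by blast
  qed
  then have "finite S \<Longrightarrow> \<Prod>S dvd ((n + j) choose n) * ((2 * n - j) choose n)"
    using prod_primes_dvd by blast
  moreover have "Phi n = \<Prod>S" unfolding Phi_def S_def by simp
  \<comment> \<open>An infinite \<open>S\<close> would give the junk value \<open>Phi n = 1\<close>, so finiteness need not be shown.\<close>
  ultimately show ?thesis by (cases "finite S") simp_all
qed

end
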